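(* Let $\Phi(t)$ be a motion of the toy top with Cayley–Klein parameters $\alpha,\beta,\gamma,\delta$, let $c=2s\alpha\beta=\rho e^{i\phi}$ be the trajectory of the tip in polar form (so $\rho=s\sqrt{1-u^2}$), and let $u,w,e_4,w_{\pm1}$ be as in the context. At every time at which $-1<u<1$, $$i\,\phi'(t)=\frac12\,\frac{u^2-e_4^2}{1-e_4^2}\left(\frac{w_{-1}}{u+1}-\frac{w_{+1}}{u-1}\right)\frac{u'}{w}.$$
   Context: $\mathrm{SU}(2)$: complex $2\times2$ matrices $\begin{pmatrix}\alpha&\beta\\ \gamma&\delta\end{pmatrix}$ with $\alpha\delta-\beta\gamma=1$, $\delta=\bar\alpha$, $\gamma=-\bar\beta$; $\mathrm{su}(2)\cong\mathbb{R}^3$ via $(x_1,x_2,x_3)\mapsto\frac12\begin{pmatrix}ix_3&-x_2+ix_1\\ x_2+ix_1&-ix_3\end{pmatrix}$, $[x,y]=xy-yx$, $\langle x,y\rangle=-2\mathrm{Tr}(xy)$, $k=\frac12\mathrm{diag}(i,-i)$. Toy top parameters: $A,C>0$ moments of inertia (perpendicular axis through center of mass, symmetry axis), $s>0$ tip-to-center-of-mass distance, $p>0$ equal to $s$ times mass, gravity $1$. For a curve $\Phi(t)$: $\omega=\Phi'\Phi^{-1}$, $r=\Phi k\Phi^{-1}$, $T=\frac12A\langle\omega,\omega\rangle+\frac12(C-A)\langle\omega,r\rangle^2+\frac12ps\langle[r,k],\omega\rangle^2$, $V=p\langle r,k\rangle$, $m=A\omega+(C-A)\langle\omega,r\rangle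 r+ps\langle[r,k],\omega\rangle[r,k]$, $DL=(C-A)\langle\omega,r\rangle[r,\omega]+ps\langle[r,k],\omega\rangle[r,[k,\omega]]+p[r,k]$. A motion is a solution of $m'=[\omega,m]+DL$, $\Phi'=\omega\Phi$, with first integrals $h=T+V$, $l=\langle m,k\rangle$, $n=\langle m,r\rangle$; $u=\langle r,k\rangle$. Let $e_1\le e_2\le e_3$ be the roots of $\frac1p(1-u^2)(h-\frac{n^2}{2C}-pu)-\frac1{2Ap}(l-nu)^2$, $e_4=\sqrt{1+A/(ps)}$, $R(u)=(u-e_1)(u-e_2)(u-e_3)(u^2-e_4^2)$, $w(t)=-i\sqrt{s/2}(u^2-e_4^2)u'(t)$ (so $w^2=R(u)$), with $u'/w$ meaning $i\sqrt{2/s}/(u^2-e_4^2)$. The constants $w_{\pm1}$ are the square roots of $R(\pm1)$ given by $w_{\pm1}=\sqrt{s/2}\,(1-e_4^2)\,(l\mp n)/A$. The plane of the tip is identified with $\mathbb{C}$ via $(x_1,x_2)\mapsto x_1+ix_2$ (horizontal fixed-frame coordinates), $c$ being the projection of $-s r$; $\phi$ is a continuous choice of argument of $c$ on time intervals where $c\ne0$. *)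

theory Defs
  imports "HOL-Analysis.Analysis"
begin

type_synonym cmat = "complex^2^2"

text \<open>Entries: M$1$1 = alpha, M$1$2 = beta, M$2$1 = gamma, M$2$2 = delta.\<close>

definition SU2 :: "cmat set" where
  "SU2 = {M. M$1$1 * M$2$2 - M$1$2 * M$2$1 = 1
            \<and> M$2$2 = cnj (M$1$1) \<and> M$2$1 = - cnj (M$1$2)}"

definition su2_of :: "real^3 \<Rightarrow> cmat" where
  "su2_of x = (\<chi> i j.
     if i = 1 \<and> j = 1 then (\<i> * of_real (x$3)) / 2
     else if i = 1 \<and> j = 2 then (- of_real (x$2) + \<i> * of_real (x$1)) / 2
     else if i = 2 \<and> j = 1 then (of_real (x$2) + \<i> * of_real (x$1)) / 2
     else (- \<i> * of_real (x$3)) / 2)"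

definition su2_coords :: "cmat \<Rightarrow> real^3" where
  "su2_coords M = (THE x. su2_of x = M)"

definition brk :: "cmat \<Rightarrow> cmat \<Rightarrow> cmat" where
  "brk x y = x ** y - y ** x"

text \<open>The inner product -2 Tr(xy), real-valued on su(2).\<close>
definition ip :: "cmat \<Rightarrow> cmat \<Rightarrow> real" where
  "ip x y = Re (- 2 * trace (x ** y))"

definition kk :: cmat where
  "kk = (\<chi> i j. if i = 1 \<and> j = 1 then \<i> / 2 else if i = 2 \<and> j = 2 then - \<i> / 2 else 0)"

definition omega :: "(real \<Rightarrow> cmat) \<Rightarrow> real \<Rightarrow> cmat" where
  "omega \<Phi> t = vector_derivative \<Phi> (at t) ** matrix_inv (\<Phi> t)"

definition rvec :: "(real \<Rightarrow> cmat) \<Rightarrow> real \<Rightarrow> cmat" where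
  "rvec \<Phi> t = \<Phi> t ** kk ** matrix_inv (\<Phi> t)"

definition mom :: "real \<Rightarrow> real \<Rightarrow> real \<Rightarrow> real \<Rightarrow> cmat \<Rightarrow> cmat \<Rightarrow> cmat" where
  "mom A C p s \<omega> r = A *\<^sub>R \<omega> + ((C - A) * ip \<omega> r) *\<^sub>R r
      + (p * s * ip (brk r kk) \<omega>) *\<^sub>R brk r kk"

definition DLag :: "real \<Rightarrow> real \<Rightarrow> real \<Rightarrow> real \<Rightarrow> cmat \<Rightarrow> cmat \<Rightarrow> cmat" where
  "DLag A C p s \<omega> r = ((C - A) * ip \<omega> r) *\<^sub>R brk r \<omega>
      + (p * s * ip (brk r kk) \<omega>) *\<^sub>R brk r (brk kk \<omega>) + p *\<^sub>R brk r kk"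

definition is_motion :: "real \<Rightarrow> real \<Rightarrow> real \<Rightarrow> real \<Rightarrow> real set \<Rightarrow> (real \<Rightarrow> cmat) \<Rightarrow> bool" where
  "is_motion A C p s I \<Phi> \<longleftrightarrow>
     (\<forall>t\<in>I. \<Phi> t \<in> SU2 \<and> \<Phi> differentiable at t
        \<and> ((\<lambda>\<tau>. mom A C p s (omega \<Phi> \<tau>) (rvec \<Phi> \<tau>)) has_vector_derivative
             (brk (omega \<Phi> t) (mom A C p s (omega \<Phi> t) (rvec \<Phi> t))
              + DLag A C p s (omega \<Phi> t) (rvec \<Phi> t))) (at t))"

definition uu :: "(real \<Rightarrow> cmat) \<Rightarrow> real \<Rightarrow> real" where
  "uu \<Phi> t = ip (rvec \<Phi> t) kk"

definition ll :: "real \<Rightarrow> real \<Rightarrow> real \<Rightarrow> real \<Rightarrow> (real \<Rightarrow> cmat) \<Rightarrow> real \<Rightarrow> real" where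
  "ll A C p s \<Phi> t = ip (mom A C p s (omega \<Phi> t) (rvec \<Phi> t)) kk"

definition nn :: "real \<Rightarrow> real \<Rightarrow> real \<Rightarrow> real \<Rightarrow> (real \<Rightarrow> cmat) \<Rightarrow> real \<Rightarrow> real" where
  "nn A C p s \<Phi> t = ip (mom A C p s (omega \<Phi> t) (rvec \<Phi> t)) (rvec \<Phi> t)"

definition tip :: "real \<Rightarrow> (real \<Rightarrow> cmat) \<Rightarrow> real \<Rightarrow> complex" where
  "tip s \<Phi> t = (let x = su2_coords (- (s *\<^sub>R rvec \<Phi> t)) in Complex (x$1) (x$2))"

definition e4 :: "real \<Rightarrow> real \<Rightarrow> real \<Rightarrow> real" where
  "e4 A p s = sqrt (1 + A / (p * s))"

definition wp1 :: "real \<Rightarrow> real \<Rightarrow> real \<Rightarrow> real \<Rightarrow> real \<Rightarrow> real" where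
  "wp1 A p s l n = sqrt (s / 2) * (1 - (e4 A p s)^2) * (l - n) / A"

definition wm1 :: "real \<Rightarrow> real \<Rightarrow> real \<Rightarrow> real \<Rightarrow> real \<Rightarrow> real" where
  "wm1 A p s l n = sqrt (s / 2) * (1 - (e4 A p s)^2) * (l + n) / A"

text \<open>The meaning of u'/w: i sqrt(2/s) / (u^2 - e4^2).\<close>
definition u_over_w :: "real \<Rightarrow> real \<Rightarrow> real \<Rightarrow> real \<Rightarrow> complex" where
  "u_over_w A p s u = \<i> * of_real (sqrt (2 / s)) / of_real (u^2 - (e4 A p s)^2)"

end

theory Submission
  imports Defs
begin

text \<open>
  Write \<open>\<Phi> = (\<alpha>, \<beta>; -cnj \<beta>, cnj \<alpha>)\<close> with \<open>|\<alpha>|\<^sup>2 + |\<beta>|\<^sup>2 = 1\<close>. All matrices that occur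
  (\<open>\<Phi>\<close>, its inverse, \<open>\<Phi>'\<close>, \<open>k\<close>) have this shape, which is closed under products, so everything
  reduces to arithmetic on the pair \<open>(\<alpha>, \<beta>)\<close>: the axis is \<open>r = (\<i> u/2, -\<i> \<alpha>\<beta>)\<close> with
  \<open>u = |\<alpha>|\<^sup>2 - |\<beta>|\<^sup>2\<close>, and the tip is \<open>c = 2s\<alpha>\<beta>\<close>. A continuous argument of a differentiable
  nonvanishing curve has derivative \<open>Im (c'/c) = Im (\<alpha>'/\<alpha> + \<beta>'/\<beta>)\<close>, and a direct computation gives
  \<open>\<phi>' (1 - u\<^sup>2) = \<langle>\<omega>,k\<rangle> - u \<langle>\<omega>,r\<rangle>\<close>. Since \<open>[r,k]\<close> is orthogonal to \<open>k\<close> and \<open>r\<close> and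
  \<open>\<langle>r,r\<rangle> = 1\<close>, the definition of \<open>m\<close> gives \<open>l - n u = A (\<langle>\<omega>,k\<rangle> - u \<langle>\<omega>,r\<rangle>)\<close>, so
  \<open>\<phi>' = (l - n u) / (A (1 - u\<^sup>2))\<close>; the stated right-hand side is this expression split into
  partial fractions. Only kinematics enters: of the equations of motion just the facts that \<open>\<Phi>\<close>
  is an \<open>SU(2)\<close>-valued curve differentiable at \<open>t\<close> are used.
\<close>

definition su2_mat :: "complex \<Rightarrow> complex \<Rightarrow> cmat" where
  "su2_mat a b = (\<chi> i j. if i = 1 then (if j = 1 then a else b) else (if j = 1 then - cnj b else cnj a))"

lemma su2_mat_nth [simp]:
  "su2_mat a b $1$1 = a" "su2_mat a b $1$2 = b" "su2_mat a b $2$1 = - cnj b" "su2_mat a b $2$2 = cnj a"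
  by (simp_all add: su2_mat_def)

lemma cmat_eq_iff: "(M::cmat) = N \<longleftrightarrow> M$1$1 = N$1$1 \<and> M$1$2 = N$1$2 \<and> M$2$1 = N$2$1 \<and> M$2$2 = N$2$2"
  by (auto simp: vec_eq_iff forall_2)

lemma su2_mat_eq_iff: "su2_mat a b = su2_mat c d \<longleftrightarrow> a = c \<and> b = d"
  by (auto simp: cmat_eq_iff)

lemma su2_mat_mult: "su2_mat a b ** su2_mat c d = su2_mat (a * c - b * cnj d) (a * d + b * cnj c)"
  by (simp add: cmat_eq_iff matrix_matrix_mult_def sum_2 algebra_simps)

lemma kk_eq_su2_mat: "kk = su2_mat (\<i> / 2) 0"
  by (simp add: cmat_eq_iff kk_def)

lemma mat_1_eq_su2_mat: "mat 1 = su2_mat 1 0"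
  by (simp add: cmat_eq_iff mat_def)

lemma su2_of_eq_su2_mat: "su2_of x = su2_mat (\<i> * of_real (x$3) / 2) (\<i> * Complex (x$1) (x$2) / 2)"
  by (simp add: cmat_eq_iff su2_of_def complex_eq_iff)

lemma su2_of_inj: "su2_of x = su2_of y \<Longrightarrow> x = y"
  unfolding su2_of_eq_su2_mat su2_mat_eq_iff by (auto simp: vec_eq_iff forall_3 complex_eq_iff)

lemma su2_coords_su2_mat: "su2_coords (su2_mat (\<i> * of_real h / 2) (\<i> * z / 2)) = vector [Re z, Im z, h]"
proof -
  have coords: "su2_of (vector [Re z, Im z, h]) = su2_mat (\<i> * of_real h / 2) (\<i> * z / 2)"
    by (simp add: su2_of_eq_su2_mat vector_3)
  show ?thesis
    unfolding su2_coords_def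
  proof (rule the_equality)
    show "x = vector [Re z, Im z, h]" if "su2_of x = su2_mat (\<i> * of_real h / 2) (\<i> * z / 2)" for x
      using that coords su2_of_inj by metis
  qed (rule coords)
qed

lemma matrix_inv_unique:
  assumes "(M::'a::semiring_1^'n^'n) ** N = mat 1" and "N ** M = mat 1"
  shows "matrix_inv M = N"
proof -
  have "\<exists>N'. M ** N' = mat 1 \<and> N' ** M = mat 1"
    using assms by blast
  then have inv: "matrix_inv M ** M = mat 1"
    unfolding matrix_inv_def by (rule someI2_ex) blast
  have "matrix_inv M = matrix_inv M ** (M ** N)"
    using assms(1) by simp
  also have "\<dots> = (matrix_inv M ** M) ** N"
    by (rule matrix_mul_assoc)
  finally show ?thesis
    using inv by simp
qed

lemma mult_cnj_eq_of_real_cmod_square: "z * cnj z = (of_real (cmod z))^2"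
  by (simp flip: of_real_power add: complex_norm_square)

lemma norm_sum_eq_1_iff: "(cmod a)^2 + (cmod b)^2 = 1 \<longleftrightarrow> a * cnj a + b * cnj b = 1"
  unfolding complex_norm_square[symmetric] of_real_add[symmetric] of_real_eq_1_iff ..

lemma SU2_su2_mat:
  assumes "M \<in> SU2"
  shows "M = su2_mat (M$1$1) (M$1$2)" and "(cmod (M$1$1))^2 + (cmod (M$1$2))^2 = 1"
  using assms by (auto simp: SU2_def cmat_eq_iff norm_sum_eq_1_iff)

lemma matrix_inv_su2_mat:
  assumes "(cmod a)^2 + (cmod b)^2 = 1"
  shows "matrix_inv (su2_mat a b) = su2_mat (cnj a) (- b)"
  using assms by (intro matrix_inv_unique)
    (simp_all add: su2_mat_mult mat_1_eq_su2_mat norm_sum_eq_1_iff mult.commute)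

lemma uminus_scaleR_su2_mat: "- (r *\<^sub>R su2_mat a b) = su2_mat (- of_real r * a) (- of_real r * b)"
  by (simp add: cmat_eq_iff complex_eq_iff)

lemma ip_eq_entries:
  "ip X Y = Re (- 2 * (X$1$1 * Y$1$1 + X$1$2 * Y$2$1 + X$2$1 * Y$1$2 + X$2$2 * Y$2$2))"
  by (simp add: ip_def trace_def sum_2 matrix_matrix_mult_def algebra_simps)

lemma ip_su2_mat: "ip (su2_mat a b) (su2_mat c d) = - 4 * Re (a * c - b * cnj d)"
  by (simp add: ip_def trace_def sum_2 matrix_matrix_mult_def algebra_simps)

lemma ip_commute: "ip x y = ip y x"
  unfolding ip_def trace_mul_sym[of x y] ..

lemma ip_add_left: "ip (x + y) z = ip x z + ip y z"
  by (simp add: ip_eq_entries algebra_simps)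

lemma ip_scaleR_left: "ip (c *\<^sub>R x) z = c * ip x z"
  by (simp add: ip_eq_entries algebra_simps vector_scaleR_component)

lemma ip_brk_kk_kk: "ip (brk r kk) kk = 0"
  by (simp add: ip_eq_entries brk_def matrix_matrix_mult_def sum_2 kk_def algebra_simps)

lemma ip_brk_kk_self: "ip (brk r kk) r = 0"
  by (simp add: ip_eq_entries brk_def matrix_matrix_mult_def sum_2 kk_def algebra_simps)

lemma ip_mom_orthogonal_part:
  assumes "ip r r = 1"
  shows "ip (mom A C p s \<omega> r) kk - ip (mom A C p s \<omega> r) r * ip r kk
    = A * (ip \<omega> kk - ip r kk * ip \<omega> r)"
  unfolding mom_def ip_add_left ip_scaleR_left ip_brk_kk_kk ip_brk_kk_self assms ip_commute[of r \<omega>]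
  by (simp add: algebra_simps)

lemma rvec_su2_mat:
  assumes "\<Phi> t = su2_mat a b" and "(cmod a)^2 + (cmod b)^2 = 1"
  shows "rvec \<Phi> t = su2_mat (\<i> * of_real ((cmod a)^2 - (cmod b)^2) / 2) (- \<i> * a * b)"
  unfolding rvec_def assms(1) matrix_inv_su2_mat[OF assms(2)] kk_eq_su2_mat su2_mat_mult su2_mat_eq_iff
  by (simp add: mult_cnj_eq_of_real_cmod_square algebra_simps)

lemma uu_su2_mat:
  assumes "\<Phi> t = su2_mat a b" and "(cmod a)^2 + (cmod b)^2 = 1"
  shows "uu \<Phi> t = (cmod a)^2 - (cmod b)^2"
  unfolding uu_def rvec_su2_mat[of \<Phi> t, OF assms] kk_eq_su2_mat ip_su2_mat by simp

lemma ip_rvec_rvec: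
  assumes "\<Phi> t = su2_mat a b" and "(cmod a)^2 + (cmod b)^2 = 1"
  shows "ip (rvec \<Phi> t) (rvec \<Phi> t) = 1"
proof -
  define u where "u = (cmod a)^2 - (cmod b)^2"
  define z where "z = - \<i> * a * b"
  have "ip (rvec \<Phi> t) (rvec \<Phi> t) = u^2 + 4 * Re (z * cnj z)"
    unfolding rvec_su2_mat[of \<Phi> t, OF assms] ip_su2_mat u_def[symmetric] z_def[symmetric]
    by (simp add: power2_eq_square)
  also have "\<dots> = u^2 + 4 * (cmod a)^2 * (cmod b)^2"
    by (simp only: mult_cnj_eq_of_real_cmod_square z_def norm_mult norm_minus_cancel norm_ii)
      (simp add: power_mult_distrib)
  also have "\<dots> = ((cmod a)^2 + (cmod b)^2)^2"
    unfolding u_def by (simp add: power2_eq_square algebra_simps)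
  finally show ?thesis unfolding assms(2) by simp
qed

lemma tip_su2_mat:
  assumes "\<Phi> t = su2_mat a b" and "(cmod a)^2 + (cmod b)^2 = 1"
  shows "tip s \<Phi> t = 2 * of_real s * a * b"
proof -
  have "- (s *\<^sub>R rvec \<Phi> t) = su2_mat (\<i> * of_real (- s * ((cmod a)^2 - (cmod b)^2)) / 2) (\<i> * (2 * of_real s * a * b) / 2)"
    unfolding rvec_su2_mat[of \<Phi> t, OF assms] uminus_scaleR_su2_mat by (simp add: algebra_simps)
  then have "tip s \<Phi> t = (let x = su2_coords (su2_mat (\<i> * of_real (- s * ((cmod a)^2 - (cmod b)^2)) / 2) (\<i> * (2 * of_real s * a * b) / 2)) in Complex (x$1) (x$2))"
    unfolding tip_def by (simp only:)
  then show ?thesis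
    unfolding su2_coords_su2_mat by (simp add: complex_eq_iff)
qed

lemma omega_su2_mat:
  assumes "\<Phi> t = su2_mat a b" and "(cmod a)^2 + (cmod b)^2 = 1"
    and "vector_derivative \<Phi> (at t) = su2_mat a' b'"
  shows "omega \<Phi> t = su2_mat (a' * cnj a + b' * cnj b) (a * b' - a' * b)"
  unfolding omega_def assms(1,3) matrix_inv_su2_mat[OF assms(2)] su2_mat_mult by (simp add: algebra_simps)

lemma Im_logderiv_su2_eq:
  fixes a b a' b' :: complex
  assumes norm: "(cmod a)^2 + (cmod b)^2 = 1" and "a \<noteq> 0" and "b \<noteq> 0"
  defines "u \<equiv> (cmod a)^2 - (cmod b)^2"
    and "\<omega> \<equiv> su2_mat (a' * cnj a + b' * cnj b) (a * b' - a' * b)"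
  shows "Im (a' / a + b' / b) * (1 - u^2)
    = ip \<omega> kk - u * ip \<omega> (su2_mat (\<i> * of_real u / 2) (- \<i> * a * b))"
proof -
  obtain a1 a2 b1 b2 c1 c2 d1 d2
    where ab: "a = Complex a1 a2" "b = Complex b1 b2" "a' = Complex c1 c2" "b' = Complex d1 d2"
    using complex.exhaust_sel by metis
  define P Q where "P = Im (a' * cnj a)" and "Q = Im (b' * cnj b)"
  have A0: "(cmod a)^2 \<noteq> 0" and B0: "(cmod b)^2 \<noteq> 0"
    using assms(2,3) by simp_all
  have B: "(cmod b)^2 = 1 - (cmod a)^2"
    using norm by simp
  have "Im (a' / a + b' / b) * (1 - u^2) = (P / (cmod a)^2 + Q / (cmod b)^2) * (4 * (cmod a)^2 * (cmod b)^2)"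
  proof -
    have "Im (a' / a + b' / b) = P / (cmod a)^2 + Q / (cmod b)^2"
      unfolding P_def Q_def ab by (simp add: Im_divide cmod_power2)
    moreover have "1 - u^2 = 4 * (cmod a)^2 * (cmod b)^2"
    proof -
      have "1 - u^2 = ((cmod a)^2 + (cmod b)^2)^2 - u^2"
        using norm by simp
      then show ?thesis
        unfolding u_def by (simp add: power2_eq_square algebra_simps)
    qed
    ultimately show ?thesis
      by (simp only:)
  qed
  also have "\<dots> = 4 * ((cmod b)^2 * P + (cmod a)^2 * Q)"
    using A0 B0 by (simp add: field_simps)
  also have "\<dots> = 2 * (P + Q) - u * (2 * ((cmod a)^2 + (cmod b)^2) * (P - Q))"
    unfolding u_def norm unfolding B by (simp add: algebra_simps)
  also have "\<dots> = ip \<omega> kk - u * ip \<omega> (su2_mat (\<i> * of_real u / 2) (- \<i> * a * b))"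
  proof -
    have "ip \<omega> kk = 2 * (P + Q)"
      unfolding \<omega>_def kk_eq_su2_mat ip_su2_mat P_def Q_def ab by (simp add: field_simps)
    moreover have "ip \<omega> (su2_mat (\<i> * of_real u / 2) (- \<i> * a * b)) = 2 * ((cmod a)^2 + (cmod b)^2) * (P - Q)"
      unfolding \<omega>_def ip_su2_mat P_def Q_def u_def ab cmod_power2
      by (simp add: power2_eq_square field_simps)
    ultimately show ?thesis
      by simp
  qed
  finally show ?thesis .
qed

lemma has_vector_derivative_cmat_nth:
  "(\<Phi> has_vector_derivative D) F \<Longrightarrow> ((\<lambda>\<tau>. \<Phi> \<tau> $ i $ j) has_vector_derivative D $ i $ j) F"
  by (intro bounded_linear.has_vector_derivative[OF bounded_linear_vec_nth])

lemma SU2_vector_derivative_su2_mat: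
  assumes "open S" and "t \<in> S" and SU2: "\<forall>\<tau>\<in>S. \<Phi> \<tau> \<in> SU2"
    and D: "(\<Phi> has_vector_derivative D) (at t)"
  shows "D = su2_mat (D$1$1) (D$1$2)"
proof -
  have "((\<lambda>\<tau>. \<Phi> \<tau> $2$1) has_vector_derivative - cnj (D$1$2)) (at t)"
  proof (rule has_vector_derivative_transform_within_open[OF _ assms(1,2)])
    show "((\<lambda>\<tau>. - cnj (\<Phi> \<tau> $1$2)) has_vector_derivative - cnj (D$1$2)) (at t)"
      by (intro derivative_intros has_vector_derivative_cmat_nth D)
  qed (use SU2 in \<open>simp add: SU2_def\<close>)
  moreover have "((\<lambda>\<tau>. \<Phi> \<tau> $2$2) has_vector_derivative cnj (D$1$1)) (at t)"
  proof (rule has_vector_derivative_transform_within_open[OF _ assms(1,2)])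
    show "((\<lambda>\<tau>. cnj (\<Phi> \<tau> $1$1)) has_vector_derivative cnj (D$1$1)) (at t)"
      by (intro derivative_intros has_vector_derivative_cmat_nth D)
  qed (use SU2 in \<open>simp add: SU2_def\<close>)
  ultimately have "D$2$1 = - cnj (D$1$2)" and "D$2$2 = cnj (D$1$1)"
    using has_vector_derivative_cmat_nth[OF D] vector_derivative_unique_at by blast+
  then show ?thesis
    by (simp add: cmat_eq_iff)
qed

lemma tip_has_vector_derivative:
  assumes "open S" and "t \<in> S" and SU2: "\<forall>\<tau>\<in>S. \<Phi> \<tau> \<in> SU2"
    and D: "(\<Phi> has_vector_derivative D) (at t)"
  shows "(tip s \<Phi> has_vector_derivative
    2 * of_real s * (\<Phi> t $1$1 * D$1$2 + D$1$1 * \<Phi> t $1$2)) (at t)"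
proof (rule has_vector_derivative_transform_within_open[OF _ assms(1,2)])
  show "((\<lambda>\<tau>. 2 * of_real s * (\<Phi> \<tau> $1$1 * \<Phi> \<tau> $1$2)) has_vector_derivative
      2 * of_real s * (\<Phi> t $1$1 * D$1$2 + D$1$1 * \<Phi> t $1$2)) (at t)"
    by (intro derivative_intros has_vector_derivative_cmat_nth D)
  show "2 * of_real s * (\<Phi> \<tau> $1$1 * \<Phi> \<tau> $1$2) = tip s \<Phi> \<tau>" if "\<tau> \<in> S" for \<tau>
    using tip_su2_mat[of \<Phi> \<tau>, OF SU2_su2_mat[of "\<Phi> \<tau>"]] SU2 that by (simp add: mult.assoc)
qed

lemma exp_ii_eq_imp_eq:
  fixes x y :: real
  assumes "exp (\<i> * of_real x) = exp (\<i> * of_real y)" and "\<bar>x - y\<bar> < 2 * pi"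
  shows "x = y"
proof -
  have "exp (\<i> * of_real (x - y)) = 1"
    by (simp add: right_diff_distrib exp_diff assms(1))
  then obtain k :: int where k: "x - y = of_int (2 * k) * pi"
    unfolding exp_eq_1 by auto
  then have "\<bar>real_of_int k\<bar> < 1"
    using assms(2) by (simp add: abs_mult)
  then have "k = 0"
    by linarith
  then show ?thesis
    using k by simp
qed

lemma has_real_derivative_polar_angle:
  fixes c :: "real \<Rightarrow> complex" and \<phi> :: "real \<Rightarrow> real"
  assumes c': "(c has_vector_derivative c') (at t)" and c0: "c t \<noteq> 0" and "isCont \<phi> t"
    and polar: "\<forall>\<^sub>F \<tau> in nhds t. c \<tau> = of_real (cmod (c \<tau>)) * exp (\<i> * of_real (\<phi> \<tau>))"
  shows "(\<phi> has_real_derivative Im (c' / c t)) (at t)"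
proof -
  \<comment> \<open>a differentiable branch of the argument near t; \<open>\<phi> - g\<close> is continuous with values in \<open>2\<pi>\<int>\<close>, hence 0 near t\<close>
  define g where "g \<tau> = \<phi> t + Im (Ln (c \<tau> / c t))" for \<tau>
  have g': "(g has_real_derivative Im (c' / c t)) (at t)"
  proof -
    have "((\<lambda>\<tau>. c \<tau> / c t) has_vector_derivative c' / c t) (at t)"
      using c' by (rule has_vector_derivative_divide)
    moreover have "(Ln has_field_derivative inverse (c t / c t)) (at (c t / c t))"
      using c0 by (intro has_field_derivative_Ln) simp
    ultimately have "((Ln \<circ> (\<lambda>\<tau>. c \<tau> / c t)) has_vector_derivative c' / c t) (at t)"
      using c0 field_vector_diff_chain_at by fastforce
    from bounded_linear.has_vector_derivative[OF bounded_linear_Im this]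
    have "((\<lambda>\<tau>. Im (Ln (c \<tau> / c t))) has_real_derivative Im (c' / c t)) (at t)"
      by (simp add: has_real_derivative_iff_has_vector_derivative o_def)
    from DERIV_add[OF DERIV_const this, of "\<phi> t"] show ?thesis
      unfolding g_def by simp
  qed
  have gt: "g t = \<phi> t"
    using c0 by (simp add: g_def)
  have "((\<lambda>\<tau>. \<phi> \<tau> - g \<tau>) \<longlongrightarrow> 0) (at t)"
    using isCont_diff[OF assms(3) DERIV_isCont[OF g']] gt by (simp add: isCont_def)
  then have near: "\<forall>\<^sub>F \<tau> in at t. \<bar>\<phi> \<tau> - g \<tau>\<bar> < 2 * pi"
    by (auto dest: tendstoD[where e = "2 * pi"] simp: dist_real_def)
  have nonzero: "\<forall>\<^sub>F \<tau> in at t. c \<tau> \<noteq> 0"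
    using has_vector_derivative_continuous[OF c'] c0 by (intro tendsto_imp_eventually_ne) (simp add: isCont_def)
  have polar_t: "c t = of_real (cmod (c t)) * exp (\<i> * of_real (\<phi> t))"
    using polar by (rule eventually_nhds_x_imp_x)
  have "\<forall>\<^sub>F \<tau> in at t. \<phi> \<tau> = g \<tau>"
    using near nonzero polar[unfolded eventually_nhds_conv_at, THEN conjunct1]
  proof eventually_elim
    case (elim \<tau>)
    define w where "w = c \<tau> / c t"
    have w0: "of_real (cmod w) \<noteq> (0::complex)"
      using elim c0 by (simp add: w_def)
    have "w = of_real (cmod (c \<tau>) / cmod (c t)) * (exp (\<i> * of_real (\<phi> \<tau>)) / exp (\<i> * of_real (\<phi> t)))"
      unfolding w_def by (subst elim(3), subst polar_t) (simp add: field_simps)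
    moreover have "cmod w = cmod (c \<tau>) / cmod (c t)"
      by (simp add: w_def norm_divide)
    ultimately have "of_real (cmod w) * exp (\<i> * of_real (\<phi> \<tau> - \<phi> t)) = w"
      by (simp add: right_diff_distrib exp_diff)
    also have "w = of_real (cmod w) * exp (\<i> * of_real (g \<tau> - \<phi> t))"
      using Arg_eq[of w] Arg_eq_Im_Ln[of w] w0 by (simp add: g_def w_def)
    finally have "exp (\<i> * of_real (\<phi> \<tau> - \<phi> t)) = exp (\<i> * of_real (g \<tau> - \<phi> t))"
      using w0 by simp
    then show ?case
      using exp_ii_eq_imp_eq elim(1) by fastforce
  qed
  then have "\<forall>\<^sub>F \<tau> in nhds t. \<phi> \<tau> = g \<tau>"
    using gt by (simp add: eventually_nhds_conv_at)
  then show ?thesis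
    using g' DERIV_cong_ev by blast
qed

lemma has_real_derivative_tip_angle:
  assumes "open S" and "t \<in> S" and SU2: "\<forall>\<tau>\<in>S. \<Phi> \<tau> \<in> SU2" and "\<Phi> differentiable at t"
    and "-1 < uu \<Phi> t" and "uu \<Phi> t < 1" and "s > 0" and "isCont \<phi> t"
    and polar: "\<forall>\<^sub>F \<tau> in nhds t. tip s \<Phi> \<tau> = of_real (cmod (tip s \<Phi> \<tau>)) * exp (\<i> * of_real (\<phi> \<tau>))"
  shows "(\<phi> has_real_derivative
    (ip (omega \<Phi> t) kk - uu \<Phi> t * ip (omega \<Phi> t) (rvec \<Phi> t)) / (1 - (uu \<Phi> t)^2)) (at t)"
proof -
  define D where "D = vector_derivative \<Phi> (at t)"
  have D: "(\<Phi> has_vector_derivative D) (at t)"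
    using assms(4) by (simp add: D_def vector_derivative_works)
  define a b a' b' where "a = \<Phi> t $1$1" and "b = \<Phi> t $1$2" and "a' = D$1$1" and "b' = D$1$2"
  have \<Phi>t: "\<Phi> t = su2_mat a b" and norm: "(cmod a)^2 + (cmod b)^2 = 1"
    using SU2_su2_mat SU2 assms(2) unfolding a_def b_def by blast+
  have D_su2: "vector_derivative \<Phi> (at t) = su2_mat a' b'"
    using SU2_vector_derivative_su2_mat[OF assms(1,2) SU2 D] unfolding D_def a'_def b'_def .
  have u: "uu \<Phi> t = (cmod a)^2 - (cmod b)^2"
    using uu_su2_mat[of \<Phi> t, OF \<Phi>t norm] .
  have "a \<noteq> 0" and "b \<noteq> 0"
    using u norm assms(5,6) by auto
  have \<phi>': "(\<phi> has_real_derivative Im (a' / a + b' / b)) (at t)"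
  proof -
    have tip_t: "tip s \<Phi> t = 2 * of_real s * a * b"
      using tip_su2_mat[of \<Phi> t, OF \<Phi>t norm] .
    have "2 * of_real s * (a * b' + a' * b) / tip s \<Phi> t = a' / a + b' / b"
      unfolding tip_t using \<open>a \<noteq> 0\<close> \<open>b \<noteq> 0\<close> assms(7) by (simp add: field_simps)
    moreover have "tip s \<Phi> t \<noteq> 0"
      unfolding tip_t using \<open>a \<noteq> 0\<close> \<open>b \<noteq> 0\<close> assms(7) by simp
    ultimately show ?thesis
      using has_real_derivative_polar_angle[OF tip_has_vector_derivative[OF assms(1,2) SU2 D] _ assms(8) polar]
      unfolding a_def b_def a'_def b'_def by (simp add: mult.commute)
  qed
  have identity: "Im (a' / a + b' / b) * (1 - (uu \<Phi> t)^2)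
      = ip (omega \<Phi> t) kk - uu \<Phi> t * ip (omega \<Phi> t) (rvec \<Phi> t)"
    unfolding omega_su2_mat[of \<Phi> t, OF \<Phi>t norm D_su2] rvec_su2_mat[of \<Phi> t, OF \<Phi>t norm] u
    by (rule Im_logderiv_su2_eq[OF norm \<open>a \<noteq> 0\<close> \<open>b \<noteq> 0\<close>])
  have "1 - (uu \<Phi> t)^2 \<noteq> 0"
    using assms(5,6) abs_square_less_1[of "uu \<Phi> t"] by (simp add: abs_less_iff)
  then show ?thesis
    using \<phi>' identity[symmetric] by (simp add: nonzero_mult_div_cancel_right)
qed

lemma u_over_w_partial_fractions_eq:
  fixes A p s u l n :: real
  assumes "A > 0" and "p > 0" and "s > 0" and "-1 < u" and "u < 1"
  shows "of_real ((1/2) * (u^2 - (e4 A p s)^2) / (1 - (e4 A p s)^2)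
      * (wm1 A p s l n / (u + 1) - wp1 A p s l n / (u - 1))) * u_over_w A p s u
    = \<i> * of_real ((l - n * u) / (A * (1 - u^2)))"
proof -
  define e where "e = e4 A p s"
  have "e^2 = 1 + A / (p * s)"
    using assms(1-3) by (simp add: e_def e4_def)
  moreover have "A / (p * s) > 0"
    using assms(1-3) by simp
  moreover have "u^2 < 1"
    using assms(4,5) by (simp add: abs_square_less_1 abs_less_iff)
  ultimately have "1 - e^2 \<noteq> 0" and "u^2 - e^2 \<noteq> 0"
    by linarith+
  have "u + 1 \<noteq> 0" and "u - 1 \<noteq> 0" and "1 - u^2 \<noteq> 0"
    using assms(4,5) \<open>u^2 < 1\<close> by auto
  have sqrt: "sqrt (s / 2) * sqrt (2 / s) = 1"
    using assms(3) by (simp flip: real_sqrt_mult)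
  define K where "K = sqrt (s / 2) * (1 - e^2) / A"
  have "wm1 A p s l n = K * (l + n)" and "wp1 A p s l n = K * (l - n)"
    unfolding wm1_def wp1_def K_def e_def by simp_all
  then have "wm1 A p s l n / (u + 1) - wp1 A p s l n / (u - 1) = K * ((l + n) / (u + 1) - (l - n) / (u - 1))"
    by (simp add: right_diff_distrib)
  also have "\<dots> = K * (2 * (l - n * u) / (1 - u^2))"
    using \<open>u + 1 \<noteq> 0\<close> \<open>u - 1 \<noteq> 0\<close> \<open>1 - u^2 \<noteq> 0\<close> by (simp add: field_simps power2_eq_square)
  finally have w: "wm1 A p s l n / (u + 1) - wp1 A p s l n / (u - 1) = K * (2 * (l - n * u) / (1 - u^2))" .
  \<comment> \<open>opaque abbreviations, so that \<open>field_simps\<close> cancels these factors instead of expanding them\<close>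
  define V W G where "V = u^2 - e^2" and "W = 1 - e^2" and "G = 1 - u^2"
  have "(1/2) * V / W * (K * (2 * (l - n * u) / G)) * sqrt (2 / s) / V
      = (sqrt (s / 2) * sqrt (2 / s)) * (l - n * u) / (A * G)"
    unfolding K_def W_def[symmetric]
    using \<open>1 - e^2 \<noteq> 0\<close> \<open>u^2 - e^2 \<noteq> 0\<close> \<open>1 - u^2 \<noteq> 0\<close> assms(1)
    by (simp add: V_def[symmetric] W_def[symmetric] G_def[symmetric] field_simps)
  then have "(1/2) * (u^2 - e^2) / (1 - e^2) * (wm1 A p s l n / (u + 1) - wp1 A p s l n / (u - 1))
      * sqrt (2 / s) / (u^2 - e^2) = (l - n * u) / (A * (1 - u^2))"
    unfolding w V_def W_def G_def sqrt by simp
  moreover have "of_real R * u_over_w A p s u = \<i> * of_real (R * sqrt (2 / s) / (u^2 - e^2))" for R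
    unfolding u_over_w_def e_def[symmetric] by (simp add: mult_ac)
  ultimately show ?thesis
    by (simp only: e_def)
qed

theorem mainTheorem5:
  fixes A C s p :: real and I J :: "real set" and \<Phi> :: "real \<Rightarrow> cmat"
    and \<phi> :: "real \<Rightarrow> real" and t :: real
  assumes "A > 0" and "C > 0" and "s > 0" and "p > 0"
    and "open I" and "is_interval I"
    and "is_motion A C p s I \<Phi>"
    and "t \<in> I" and "-1 < uu \<Phi> t" and "uu \<Phi> t < 1"
    and "open J" and "t \<in> J" and "J \<subseteq> I"
    and "continuous_on J \<phi>"
    and "\<forall>\<tau>\<in>J. tip s \<Phi> \<tau> = of_real (cmod (tip s \<Phi> \<tau>)) * exp (\<i> * of_real (\<phi> \<tau>))"
  shows "\<exists>d. (\<phi> has_real_derivative d) (at t) \<and>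
    \<i> * of_real d =
      of_real ((1/2) * ((uu \<Phi> t)^2 - (e4 A p s)^2) / (1 - (e4 A p s)^2)
        * (wm1 A p s (ll A C p s \<Phi> t) (nn A C p s \<Phi> t) / (uu \<Phi> t + 1)
           - wp1 A p s (ll A C p s \<Phi> t) (nn A C p s \<Phi> t) / (uu \<Phi> t - 1)))
      * u_over_w A p s (uu \<Phi> t)"
proof -
  have SU2: "\<forall>\<tau>\<in>I. \<Phi> \<tau> \<in> SU2" and "\<Phi> differentiable at t"
    using assms(7,8) unfolding is_motion_def by blast+
  have "isCont \<phi> t"
    using assms(11,12,14) continuous_on_eq_continuous_at by blast
  moreover have "\<forall>\<^sub>F \<tau> in nhds t. tip s \<Phi> \<tau> = of_real (cmod (tip s \<Phi> \<tau>)) * exp (\<i> * of_real (\<phi> \<tau>))"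
    using eventually_nhds_in_open[OF assms(11,12)] assms(15) by (auto elim: eventually_mono)
  ultimately have \<phi>': "(\<phi> has_real_derivative
      (ip (omega \<Phi> t) kk - uu \<Phi> t * ip (omega \<Phi> t) (rvec \<Phi> t)) / (1 - (uu \<Phi> t)^2)) (at t)"
    using has_real_derivative_tip_angle[OF assms(5,8) SU2 \<open>\<Phi> differentiable at t\<close> assms(9,10,3)] by blast
  have "ip (rvec \<Phi> t) (rvec \<Phi> t) = 1"
    using SU2_su2_mat[of "\<Phi> t"] SU2 assms(8) ip_rvec_rvec by blast
  then have "ll A C p s \<Phi> t - nn A C p s \<Phi> t * uu \<Phi> t
      = A * (ip (omega \<Phi> t) kk - uu \<Phi> t * ip (omega \<Phi> t) (rvec \<Phi> t))"
    unfolding ll_def nn_def uu_def by (rule ip_mom_orthogonal_part)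
  then have "(ip (omega \<Phi> t) kk - uu \<Phi> t * ip (omega \<Phi> t) (rvec \<Phi> t)) / (1 - (uu \<Phi> t)^2)
      = (ll A C p s \<Phi> t - nn A C p s \<Phi> t * uu \<Phi> t) / (A * (1 - (uu \<Phi> t)^2))"
    using assms(1) by simp
  with \<phi>' show ?thesis
    using u_over_w_partial_fractions_eq[OF assms(1,4,3,9,10)] by auto
qed

end
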